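(* Let $(\Gamma,\tau)$ be a $z$-oriented triangulation of a connected closed $2$-dimensional surface, with transition digraph $\Gamma_{\tau}$ and Markov chain $\mathcal{X}_{\tau}$. The following are equivalent: (1) $\mathcal{X}_{\tau}$ is aperiodic; (2) $\mathcal{X}_{\tau}$ is ergodic; (3) there exists a closed directed walk in $\Gamma_{\tau}$ whose length is not divisible by $3$.
   Context: A triangulation $\Gamma$ of a connected closed surface $M$ (not necessarily orientable) is a closed $2$-cell embedding of a connected finite simple graph in $M$ all of whose faces are triangles. Two edges are adjacent if distinct and in a common face; two faces are adjacent if distinct and their intersection is an edge. A zigzag is a sequence of edges $(e_i)_{i\in\mathbb{N}}$ such that for every $i$: $e_i,e_{i+1}$ are adjacent, the faces containing $e_i,e_{i+1}$ and $e_{i+1},e_{i+2}$ are adjacent, and $e_i,e_{i+2}$ are disjoint; it is a cyclic sequence, equivalently a cyclic vertex sequence $v_1,\dots,v_n$ with $e_i=v_iv_{i+1}$, traversing $e_i$ from $v_i$ to $v_{i+1}$. A $z$-orientation $\tau$ is a set of zigzags containing exactly one of $Z,Z^{-1}$ (reversed zigzag) for every zigzag $Z$. Every edge is traversed exactly twice in total by zigzags of $\tau$; it is of type I if in opposite directions, of type II if in the same direction (then regarded as directed that way). Each face has either two type I edges and one type II edge (type I) or three type II edges forming a directed cycle (type II). For $v\in V=\{v_1,\dots,v_n\}$ let $d(v)$ be the number of type I edges at $v$ plus twice the number of type II edges directed out of $v$. Set $p_{ij}=1/d(v_i)$ if $v_iv_j$ is a type I edge, $p_{ij}=2/d(v_i)$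 if $v_iv_j$ is a type II edge directed from $v_i$ to $v_j$, $p_{ij}=0$ otherwise. $\Gamma_{\tau}$ is the digraph on $V$ with edge $v_i\to v_j$ iff $p_{ij}>0$, and $\mathcal{X}_{\tau}$ is the time-homogeneous Markov chain on $V$ with transition matrix $[p_{ij}]$. Ergodic means irreducible and aperiodic. The length of a walk counts edges with multiplicity. *)

theory Defs
  imports Complex_Main
begin

text \<open>A triangulation is given by its set of faces F; each face is the 3-element set
of its vertices. Vertices are the union of the faces, edges are the 2-subsets of faces.\<close>

definition tri_vertices :: "'a set set \<Rightarrow> 'a set" where
  "tri_vertices F = \<Union>F"

definition tri_edges :: "'a set set \<Rightarrow> 'a set set" where
  "tri_edges F = {e. card e = 2 \<and> (\<exists>f\<in>F. e \<subseteq> f)}"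

definition link_rel :: "'a set set \<Rightarrow> 'a \<Rightarrow> ('a \<times> 'a) set" where
  "link_rel F v = {(a, b). {v, a, b} \<in> F \<and> a \<noteq> b \<and> v \<noteq> a \<and> v \<noteq> b}"

definition graph_adj :: "'a set set \<Rightarrow> ('a \<times> 'a) set" where
  "graph_adj F = {(u, w). {u, w} \<in> tri_edges F}"

definition closed_surface_triangulation :: "'a set set \<Rightarrow> bool" where
  "closed_surface_triangulation F \<longleftrightarrow>
     finite F \<and> F \<noteq> {} \<and>
     (\<forall>f\<in>F. card f = 3) \<and>
     \<comment> \<open>every edge lies in exactly two faces\<close>
     (\<forall>e\<in>tri_edges F. card {f\<in>F. e \<subseteq> f} = 2) \<and>
     \<comment> \<open>the link of every vertex is connected (hence a single cycle): surface condition\<close>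
     (\<forall>v\<in>tri_vertices F. \<forall>a b. {v, a} \<in> tri_edges F \<and> {v, b} \<in> tri_edges F
          \<longrightarrow> (a, b) \<in> (link_rel F v)\<^sup>*) \<and>
     \<comment> \<open>connectedness\<close>
     (\<forall>u\<in>tri_vertices F. \<forall>w\<in>tri_vertices F. (u, w) \<in> (graph_adj F)\<^sup>*)"

text \<open>A zigzag is represented by its (bi-infinite, cyclic) vertex sequence z with
edges e_i = {z i, z (i+1)}, the edge e_i being traversed from z i to z (i+1).\<close>

definition zigzag :: "'a set set \<Rightarrow> (int \<Rightarrow> 'a) \<Rightarrow> bool" where
  "zigzag F z \<longleftrightarrow>
     (\<forall>i::int. let e = (\<lambda>j. {z j, z (j + 1)}) in
        e i \<in> tri_edges F \<and>
        \<comment> \<open>e_i, e_{i+1} adjacent\<close>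
        e i \<noteq> e (i + 1) \<and> (\<exists>f\<in>F. e i \<subseteq> f \<and> e (i + 1) \<subseteq> f) \<and>
        \<comment> \<open>the faces containing e_i,e_{i+1} and e_{i+1},e_{i+2} are adjacent\<close>
        (\<forall>f\<in>F. \<forall>g\<in>F. e i \<union> e (i + 1) \<subseteq> f \<and> e (i + 1) \<union> e (i + 2) \<subseteq> g
             \<longrightarrow> f \<noteq> g \<and> f \<inter> g \<in> tri_edges F) \<and>
        \<comment> \<open>e_i, e_{i+2} disjoint\<close>
        e i \<inter> e (i + 2) = {})"

definition zz_shift :: "(int \<Rightarrow> 'a) \<Rightarrow> int \<Rightarrow> (int \<Rightarrow> 'a)" where
  "zz_shift z k = (\<lambda>i. z (i + k))"

definition zz_rev :: "(int \<Rightarrow> 'a) \<Rightarrow> (int \<Rightarrow> 'a)" where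
  "zz_rev z = (\<lambda>i. z (- i))"

text \<open>A z-orientation is a set of zigzags (each zigzag being the class of its vertex
sequences under shifting, so tau is closed under shifts) containing exactly one of
Z and its reverse for every zigzag Z.\<close>
definition z_orientation :: "'a set set \<Rightarrow> (int \<Rightarrow> 'a) set \<Rightarrow> bool" where
  "z_orientation F \<tau> \<longleftrightarrow>
     (\<forall>z\<in>\<tau>. zigzag F z) \<and>
     (\<forall>z\<in>\<tau>. \<forall>k. zz_shift z k \<in> \<tau>) \<and>
     (\<forall>z. zigzag F z \<longrightarrow> (z \<in> \<tau> \<longleftrightarrow> zz_rev z \<notin> \<tau>))"

text \<open>Number of traversals of the edge xy from x to y by the zigzags of tau, counted
with multiplicity: each occurrence corresponds to exactly one shifted representative
starting with x, y.\<close>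
definition traversals :: "(int \<Rightarrow> 'a) set \<Rightarrow> 'a \<Rightarrow> 'a \<Rightarrow> nat" where
  "traversals \<tau> x y = card {z\<in>\<tau>. z 0 = x \<and> z 1 = y}"

definition typeI_edge :: "'a set set \<Rightarrow> (int \<Rightarrow> 'a) set \<Rightarrow> 'a \<Rightarrow> 'a \<Rightarrow> bool" where
  "typeI_edge F \<tau> x y \<longleftrightarrow> {x, y} \<in> tri_edges F \<and> traversals \<tau> x y = 1 \<and> traversals \<tau> y x = 1"

definition typeII_edge :: "'a set set \<Rightarrow> (int \<Rightarrow> 'a) set \<Rightarrow> 'a \<Rightarrow> 'a \<Rightarrow> bool" where
  "typeII_edge F \<tau> x y \<longleftrightarrow> {x, y} \<in> tri_edges F \<and> traversals \<tau> x y = 2 \<and> traversals \<tau> y x = 0"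

definition zdeg :: "'a set set \<Rightarrow> (int \<Rightarrow> 'a) set \<Rightarrow> 'a \<Rightarrow> nat" where
  "zdeg F \<tau> v = card {u. typeI_edge F \<tau> v u} + 2 * card {u. typeII_edge F \<tau> v u}"

definition ztrans :: "'a set set \<Rightarrow> (int \<Rightarrow> 'a) set \<Rightarrow> 'a \<Rightarrow> 'a \<Rightarrow> real" where
  "ztrans F \<tau> vi vj =
     (if typeI_edge F \<tau> vi vj then 1 / real (zdeg F \<tau> vi)
      else if typeII_edge F \<tau> vi vj then 2 / real (zdeg F \<tau> vi)
      else 0)"

definition zarc :: "'a set set \<Rightarrow> (int \<Rightarrow> 'a) set \<Rightarrow> 'a \<Rightarrow> 'a \<Rightarrow> bool" where
  "zarc F \<tau> vi vj \<longleftrightarrow> ztrans F \<tau> vi vj > 0"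

fun nstep :: "'a set \<Rightarrow> ('a \<Rightarrow> 'a \<Rightarrow> real) \<Rightarrow> nat \<Rightarrow> 'a \<Rightarrow> 'a \<Rightarrow> real" where
  "nstep S P 0 i j = (if i = j then 1 else 0)"
| "nstep S P (Suc n) i j = (\<Sum>k\<in>S. nstep S P n i k * P k j)"

definition mc_irreducible :: "'a set \<Rightarrow> ('a \<Rightarrow> 'a \<Rightarrow> real) \<Rightarrow> bool" where
  "mc_irreducible S P \<longleftrightarrow> (\<forall>i\<in>S. \<forall>j\<in>S. \<exists>n. nstep S P n i j > 0)"

definition mc_period :: "'a set \<Rightarrow> ('a \<Rightarrow> 'a \<Rightarrow> real) \<Rightarrow> 'a \<Rightarrow> nat" where
  "mc_period S P i = Gcd {n. n > 0 \<and> nstep S P n i i > 0}"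

definition mc_aperiodic :: "'a set \<Rightarrow> ('a \<Rightarrow> 'a \<Rightarrow> real) \<Rightarrow> bool" where
  "mc_aperiodic S P \<longleftrightarrow> (\<forall>i\<in>S. mc_period S P i = 1)"

definition mc_ergodic :: "'a set \<Rightarrow> ('a \<Rightarrow> 'a \<Rightarrow> real) \<Rightarrow> bool" where
  "mc_ergodic S P \<longleftrightarrow> mc_irreducible S P \<and> mc_aperiodic S P"

definition closed_walk :: "('a \<Rightarrow> 'a \<Rightarrow> bool) \<Rightarrow> 'a list \<Rightarrow> bool" where
  "closed_walk A xs \<longleftrightarrow> length xs \<ge> 2 \<and> hd xs = last xs \<and>
     (\<forall>i < length xs - 1. A (xs ! i) (xs ! (i + 1)))"

definition walk_length :: "'a list \<Rightarrow> nat" where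
  "walk_length xs = length xs - 1"

end

(*
  Every face of a z-oriented triangulation carries a directed 3-cycle of the digraph: whether
  the edge ab is an arc a -> b is decided by which zigzags of tau turn at the corners a and b of
  the face abc, and counting these turns shows that the three arcs of the face close up in one
  of the two cyclic orders. Since an edge of a face lies in exactly one further face, a zigzag is
  determined by three consecutive vertices, which makes the turns well defined.
  Consequently every edge uv of the connected triangulation yields a path from u to v of length
  at most 2, so the chain is irreducible, and every vertex lies on a closed walk of length 3, so
  its period divides 3. Hence the chain is aperiodic, equivalently ergodic, exactly when some
  closed walk has length prime to 3.
*)
theory Submission
  imports Defs "HOL-Computational_Algebra.Primes"
begin

section \<open>Finite Markov chains and closed walks\<close>

lemma nstep_nonneg:
  assumes "\<And>x y. 0 \<le> P x y"
  shows "0 \<le> nstep S P n i j"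
  by (induction n arbitrary: j) (auto intro!: sum_nonneg mult_nonneg_nonneg assms)

lemma nstep_pos_iff_relpow:
  assumes "finite S" and nonneg: "\<And>x y. 0 \<le> P x y" and arcs_in_S: "\<And>x y. 0 < P x y \<Longrightarrow> x \<in> S"
  shows "0 < nstep S P n i j \<longleftrightarrow> (i, j) \<in> {(x, y). 0 < P x y} ^^ n"
proof (induction n arbitrary: j)
  case 0
  then show ?case by simp
next
  case (Suc n)
  have pos_iff: "0 < nstep S P n i k * P k j \<longleftrightarrow> 0 < nstep S P n i k \<and> 0 < P k j" for k
    using nstep_nonneg[of P S n i k] nonneg[of k j] by (auto simp: zero_less_mult_iff)
  have terms_nonneg: "0 \<le> nstep S P n i k * P k j" for k
    using nstep_nonneg[OF nonneg] nonneg by (rule mult_nonneg_nonneg)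
  have "0 < nstep S P (Suc n) i j \<longleftrightarrow> (\<exists>k\<in>S. 0 < nstep S P n i k * P k j)"
    using sum_nonneg_eq_0_iff[OF \<open>finite S\<close>, of "\<lambda>k. nstep S P n i k * P k j"]
      sum_nonneg[of S "\<lambda>k. nstep S P n i k * P k j"] terms_nonneg
    by (auto simp: order_less_le)
  also have "\<dots> \<longleftrightarrow> (\<exists>k. 0 < nstep S P n i k \<and> 0 < P k j)"
    using pos_iff arcs_in_S by blast
  finally show ?case
    using Suc.IH by auto
qed

lemma mc_irreducible_iff_rtrancl:
  assumes "finite S" and "\<And>x y. 0 \<le> P x y" and "\<And>x y. 0 < P x y \<Longrightarrow> x \<in> S"
  shows "mc_irreducible S P \<longleftrightarrow> (\<forall>i\<in>S. \<forall>j\<in>S. (i, j) \<in> {(x, y). 0 < P x y}\<^sup>*)"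
  by (simp add: mc_irreducible_def nstep_pos_iff_relpow[OF assms] rtrancl_power)

lemma ex_closed_walk_iff_relpow:
  "(\<exists>xs. closed_walk A xs \<and> walk_length xs = n) \<longleftrightarrow> 0 < n \<and> (\<exists>v. (v, v) \<in> {(x, y). A x y} ^^ n)"
proof
  assume "\<exists>xs. closed_walk A xs \<and> walk_length xs = n"
  then obtain xs where xs: "closed_walk A xs" "length xs = Suc n"
    unfolding walk_length_def closed_walk_def by fastforce
  moreover from xs(2) have "xs \<noteq> []" by auto
  ultimately have "xs ! 0 = xs ! n"
    unfolding closed_walk_def by (simp add: hd_conv_nth last_conv_nth)
  with xs show "0 < n \<and> (\<exists>v. (v, v) \<in> {(x, y). A x y} ^^ n)"
    unfolding closed_walk_def relpow_fun_conv by (auto intro!: exI[of _ "(!) xs"])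
next
  assume "0 < n \<and> (\<exists>v. (v, v) \<in> {(x, y). A x y} ^^ n)"
  then obtain f where "0 < n" "f n = f 0" "\<forall>i<n. A (f i) (f (Suc i))"
    unfolding relpow_fun_conv by auto
  define xs where "xs = map f [0..<Suc n]"
  have "length xs = Suc n" "xs \<noteq> []" "\<And>k. k \<le> n \<Longrightarrow> xs ! k = f k"
    unfolding xs_def by (simp_all add: nth_map_upt del: upt_Suc)
  with \<open>0 < n\<close> \<open>f n = f 0\<close> \<open>\<forall>i<n. A (f i) (f (Suc i))\<close>
  have "closed_walk A xs \<and> walk_length xs = n"
    unfolding closed_walk_def walk_length_def
    by (auto simp: hd_conv_nth last_conv_nth simp del: nth_map_upt)
  then show "\<exists>xs. closed_walk A xs \<and> walk_length xs = n" ..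
qed

text \<open>Inserting a cycle through v once and twice into a closed walk through i shows that the
  period at i divides the length of the cycle.\<close>
lemma Gcd_cycle_lengths_dvd:
  fixes R :: "('a \<times> 'a) set"
  assumes "(i, v) \<in> R\<^sup>*" "(v, i) \<in> R\<^sup>*" and cycle: "(v, v) \<in> R ^^ L"
  shows "Gcd {n. 0 < n \<and> (i, i) \<in> R ^^ n} dvd L"
proof (cases "L = 0")
  case False
  let ?N = "{n. 0 < n \<and> (i, i) \<in> R ^^ n}"
  obtain a b where "(i, v) \<in> R ^^ a" "(v, i) \<in> R ^^ b"
    using assms(1,2) unfolding rtrancl_power by blast
  with cycle have "(i, i) \<in> R ^^ (a + L + b)" "(i, i) \<in> R ^^ (a + L + L + b)"
    by (blast intro: relpow_trans)+
  with False have "Gcd ?N dvd a + L + b" "Gcd ?N dvd a + L + L + b"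
    by (simp_all add: Gcd_dvd)
  then show ?thesis
    using dvd_diff_nat[of "Gcd ?N" "a + L + L + b" "a + L + b"] by simp
qed simp

lemma Gcd_cycle_lengths_eq_1_iff:
  fixes R :: "('a \<times> 'a) set" and p :: nat
  assumes "Domain R \<subseteq> S" and strongly_connected: "\<And>u v. u \<in> S \<Longrightarrow> v \<in> S \<Longrightarrow> (u, v) \<in> R\<^sup>*"
    and "prime p" and p_cycles: "\<And>v. v \<in> S \<Longrightarrow> (v, v) \<in> R ^^ p" and "i \<in> S"
  shows "Gcd {n. 0 < n \<and> (i, i) \<in> R ^^ n} = 1 \<longleftrightarrow> (\<exists>v n. (v, v) \<in> R ^^ n \<and> \<not> p dvd n)"
    (is "Gcd ?N = 1 \<longleftrightarrow> _")
proof
  assume "Gcd ?N = 1"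
  have "\<exists>n\<in>?N. \<not> p dvd n"
  proof (rule ccontr)
    assume "\<not> (\<exists>n\<in>?N. \<not> p dvd n)"
    then have "p dvd Gcd ?N"
      by (intro Gcd_greatest) blast
    with \<open>Gcd ?N = 1\<close> \<open>prime p\<close> show False
      by simp
  qed
  then show "\<exists>v n. (v, v) \<in> R ^^ n \<and> \<not> p dvd n"
    by blast
next
  assume "\<exists>v n. (v, v) \<in> R ^^ n \<and> \<not> p dvd n"
  then obtain v L where cycle: "(v, v) \<in> R ^^ L" and "\<not> p dvd L"
    by blast
  then have "L \<noteq> 0"
    by (metis dvd_0_right)
  then obtain L' where "L = Suc L'"
    using not0_implies_Suc by blast
  with cycle have "(v, v) \<in> R ^^ Suc L'"
    by simp
  then obtain w where "(v, w) \<in> R"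
    by (blast dest: relpow_Suc_D2)
  with \<open>Domain R \<subseteq> S\<close> have "v \<in> S"
    by blast
  then have "Gcd ?N dvd L"
    using Gcd_cycle_lengths_dvd[OF strongly_connected strongly_connected cycle] \<open>i \<in> S\<close> by blast
  moreover have "Gcd ?N dvd p"
    using p_cycles[OF \<open>i \<in> S\<close>] prime_gt_0_nat[OF \<open>prime p\<close>] by (simp add: Gcd_dvd)
  ultimately show "Gcd ?N = 1"
    using prime_imp_coprime[OF \<open>prime p\<close> \<open>\<not> p dvd L\<close>] coprime_common_divisor_nat by blast
qed

lemma mc_aperiodic_iff_closed_walk_not_dvd:
  fixes p :: nat
  assumes "finite S" and "S \<noteq> {}" and nonneg: "\<And>x y. 0 \<le> P x y"
    and arcs_in_S: "\<And>x y. 0 < P x y \<Longrightarrow> x \<in> S" and "mc_irreducible S P"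
    and "prime p" and p_cycles: "\<And>v. v \<in> S \<Longrightarrow> (v, v) \<in> {(x, y). 0 < P x y} ^^ p"
  shows "mc_aperiodic S P \<longleftrightarrow> (\<exists>xs. closed_walk (\<lambda>x y. 0 < P x y) xs \<and> \<not> p dvd walk_length xs)"
proof -
  let ?R = "{(x, y). 0 < P x y}"
  note pos_iff = nstep_pos_iff_relpow[OF \<open>finite S\<close> nonneg arcs_in_S]
  have "Domain ?R \<subseteq> S"
    using arcs_in_S by auto
  moreover have "\<forall>u\<in>S. \<forall>v\<in>S. (u, v) \<in> ?R\<^sup>*"
    using \<open>mc_irreducible S P\<close> mc_irreducible_iff_rtrancl[OF \<open>finite S\<close> nonneg arcs_in_S] by simp
  ultimately have "mc_period S P i = 1 \<longleftrightarrow> (\<exists>v n. (v, v) \<in> ?R ^^ n \<and> \<not> p dvd n)" if "i \<in> S" for i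
    using Gcd_cycle_lengths_eq_1_iff[OF _ _ \<open>prime p\<close> p_cycles that]
    by (simp add: mc_period_def pos_iff)
  moreover have "(\<exists>v n. (v, v) \<in> ?R ^^ n \<and> \<not> p dvd n) \<longleftrightarrow>
      (\<exists>xs. closed_walk (\<lambda>x y. 0 < P x y) xs \<and> \<not> p dvd walk_length xs)"
    using ex_closed_walk_iff_relpow[of "\<lambda>x y. 0 < P x y"] by (metis dvd_0_right gr0I)
  ultimately show ?thesis
    using \<open>S \<noteq> {}\<close> unfolding mc_aperiodic_def by blast
qed

section \<open>Zigzags as sequences of faces\<close>

definition face_triple :: "'a set set \<Rightarrow> 'a \<Rightarrow> 'a \<Rightarrow> 'a \<Rightarrow> bool" where
  "face_triple F a b c \<longleftrightarrow> {a, b, c} \<in> F \<and> a \<noteq> b \<and> b \<noteq> c \<and> a \<noteq> c"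

lemma face_triple_rotate: "face_triple F a b c \<Longrightarrow> face_triple F b c a"
  unfolding face_triple_def by (auto simp: insert_commute)

lemma face_triple_reverse: "face_triple F a b c \<Longrightarrow> face_triple F c b a"
  unfolding face_triple_def by (auto simp: insert_commute)

definition face_zigzag :: "'a set set \<Rightarrow> (int \<Rightarrow> 'a) \<Rightarrow> bool" where
  "face_zigzag F z \<longleftrightarrow> (\<forall>i. face_triple F (z i) (z (i + 1)) (z (i + 2)) \<and> z (i + 3) \<noteq> z i)"

lemma card_3_subset_eq:
  assumes "card f = 3" "{a, b, c} \<subseteq> f" "a \<noteq> b" "b \<noteq> c" "a \<noteq> c"
  shows "f = {a, b, c}"
  using assms by (intro card_subset_eq[symmetric]) (auto intro: card_ge_0_finite)

lemma tri_edgesI: "{a, b} \<subseteq> f \<Longrightarrow> f \<in> F \<Longrightarrow> a \<noteq> b \<Longrightarrow> {a, b} \<in> tri_edges F"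
  unfolding tri_edges_def by auto

lemma face_zigzag_if_zigzag:
  assumes card_face: "\<And>f. f \<in> F \<Longrightarrow> card f = 3" and zz: "zigzag F z"
  shows "face_zigzag F z"
  unfolding face_zigzag_def
proof
  fix i
  from zz have "{z i, z (i + 1)} \<in> tri_edges F"
    and "\<exists>f\<in>F. {z i, z (i + 1), z (i + 2)} \<subseteq> f"
    and disjoint: "{z i, z (i + 1)} \<inter> {z (i + 2), z (i + 3)} = {}"
    unfolding zigzag_def Let_def by (auto simp: add.assoc)
  moreover from \<open>{z i, z (i + 1)} \<in> tri_edges F\<close> have "z i \<noteq> z (i + 1)"
    unfolding tri_edges_def by (auto simp: card_insert_if split: if_splits)
  ultimately show "face_triple F (z i) (z (i + 1)) (z (i + 2)) \<and> z (i + 3) \<noteq> z i"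
    unfolding face_triple_def using card_face card_3_subset_eq by (metis disjoint_iff insertCI)
qed

lemma zigzag_if_face_zigzag:
  assumes card_face: "\<And>f. f \<in> F \<Longrightarrow> card f = 3" and zz: "face_zigzag F z"
  shows "zigzag F z"
  unfolding zigzag_def
proof
  fix i :: int
  have t0: "face_triple F (z i) (z (i + 1)) (z (i + 2))" "z (i + 3) \<noteq> z i"
    and t1: "face_triple F (z (i + 1)) (z (i + 2)) (z (i + 3))"
    using zz[unfolded face_zigzag_def, rule_format, of i] zz[unfolded face_zigzag_def, rule_format, of "i + 1"]
    by (simp_all add: add.assoc)
  have adjacent: "f \<noteq> g \<and> f \<inter> g \<in> tri_edges F"
    if "f \<in> F" "g \<in> F" "{z i, z (i + 1), z (i + 2)} \<subseteq> f" "{z (i + 1), z (i + 2), z (i + 3)} \<subseteq> g"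
    for f g
  proof -
    have "f = {z i, z (i + 1), z (i + 2)}" "g = {z (i + 1), z (i + 2), z (i + 3)}"
      using that t0 t1 card_face card_3_subset_eq unfolding face_triple_def by metis+
    with t0 t1 have "f \<noteq> g" "f \<inter> g = {z (i + 1), z (i + 2)}"
      unfolding face_triple_def by auto
    with that t1 show ?thesis
      unfolding face_triple_def by (auto intro: tri_edgesI)
  qed
  have "{z i, z (i + 1)} \<in> tri_edges F \<and> {z i, z (i + 1)} \<noteq> {z (i + 1), z (i + 2)} \<and>
    (\<exists>f\<in>F. {z i, z (i + 1)} \<subseteq> f \<and> {z (i + 1), z (i + 2)} \<subseteq> f) \<and>
    (\<forall>f\<in>F. \<forall>g\<in>F. {z i, z (i + 1)} \<union> {z (i + 1), z (i + 2)} \<subseteq> f \<and>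
        {z (i + 1), z (i + 2)} \<union> {z (i + 2), z (i + 3)} \<subseteq> g
      \<longrightarrow> f \<noteq> g \<and> f \<inter> g \<in> tri_edges F) \<and>
    {z i, z (i + 1)} \<inter> {z (i + 2), z (i + 3)} = {}"
    using t0 t1 adjacent unfolding face_triple_def by (auto intro: tri_edgesI simp: doubleton_eq_iff)
  then show "let e = \<lambda>j. {z j, z (j + 1)} in e i \<in> tri_edges F \<and> e i \<noteq> e (i + 1) \<and>
    (\<exists>f\<in>F. e i \<subseteq> f \<and> e (i + 1) \<subseteq> f) \<and>
    (\<forall>f\<in>F. \<forall>g\<in>F. e i \<union> e (i + 1) \<subseteq> f \<and> e (i + 1) \<union> e (i + 2) \<subseteq> g
      \<longrightarrow> f \<noteq> g \<and> f \<inter> g \<in> tri_edges F) \<and>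
    e i \<inter> e (i + 2) = {}"
    by (simp add: add.assoc)
qed

lemma zigzag_iff_face_zigzag:
  assumes "\<And>f. f \<in> F \<Longrightarrow> card f = 3"
  shows "zigzag F z \<longleftrightarrow> face_zigzag F z"
  using assms face_zigzag_if_zigzag zigzag_if_face_zigzag by blast

lemma face_zigzagD:
  assumes "face_zigzag F z"
  shows "face_triple F (z i) (z (i + 1)) (z (i + 2))" and "z (i + 3) \<noteq> z i"
  using assms unfolding face_zigzag_def by blast+

lemma face_zigzag_shift: "face_zigzag F z \<Longrightarrow> face_zigzag F (zz_shift z k)"
  unfolding face_zigzag_def zz_shift_def by (metis add.commute add.left_commute)

lemma face_zigzag_rev:
  assumes "face_zigzag F z"
  shows "face_zigzag F (zz_rev z)"
  unfolding face_zigzag_def zz_rev_def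
proof
  fix i :: int
  show "face_triple F (z (- i)) (z (- (i + 1))) (z (- (i + 2))) \<and> z (- (i + 3)) \<noteq> z (- i)"
    using face_zigzagD[OF assms, of "- i - 2"] face_zigzagD(2)[OF assms, of "- i - 3"]
    by (auto dest: face_triple_reverse simp: algebra_simps)
qed

locale pseudo_surface =
  fixes F :: "'a set set"
  assumes finite_faces: "finite F"
    and card_face: "f \<in> F \<Longrightarrow> card f = 3"
    and card_faces_at_edge: "e \<in> tri_edges F \<Longrightarrow> card {f \<in> F. e \<subseteq> f} = 2"
begin

lemma finite_tri_vertices: "finite (tri_vertices F)"
  unfolding tri_vertices_def using finite_faces card_face by (metis card.infinite finite_Union zero_neq_numeral)

lemma ex_third_vertex:
  assumes "f \<in> F" "u \<in> f" "w \<in> f" "u \<noteq> w"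
  shows "\<exists>c. f = {u, w, c} \<and> face_triple F u w c"
proof -
  have "\<not> f \<subseteq> {u, w}"
  proof
    assume "f \<subseteq> {u, w}"
    then have "card f \<le> card {u, w}"
      by (intro card_mono) auto
    moreover have "card {u, w} \<le> 2"
      by (simp add: card_insert_if)
    ultimately show False
      using card_face[OF \<open>f \<in> F\<close>] by simp
  qed
  then obtain c where "c \<in> f" "c \<notin> {u, w}"
    by blast
  with assms have "f = {u, w, c}"
    using card_3_subset_eq[OF card_face[OF \<open>f \<in> F\<close>]] by auto
  with assms \<open>c \<notin> {u, w}\<close> show ?thesis
    unfolding face_triple_def by auto
qed

lemma face_triple_third_cases:
  assumes "face_triple F a b c" "face_triple F a b d" "face_triple F a b e" "c \<noteq> d"
  shows "e = c \<or> e = d"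
proof (rule ccontr)
  assume "\<not> (e = c \<or> e = d)"
  with assms have "{a, b, c} \<noteq> {a, b, d}" "{a, b, d} \<noteq> {a, b, e}" "{a, b, c} \<noteq> {a, b, e}"
    unfolding face_triple_def by (auto simp: insert_eq_iff)
  then have "card {{a, b, c}, {a, b, d}, {a, b, e}} = 3"
    by simp
  moreover have "{a, b} \<in> tri_edges F"
    using assms(1) unfolding face_triple_def by (auto intro: tri_edgesI)
  then have "card {f \<in> F. {a, b} \<subseteq> f} = 2"
    by (rule card_faces_at_edge)
  moreover have "card {{a, b, c}, {a, b, d}, {a, b, e}} \<le> card {f \<in> F. {a, b} \<subseteq> f}"
    using assms finite_faces unfolding face_triple_def by (intro card_mono) auto
  ultimately show False
    by simp
qed

lemma ex_face_triple_across:
  assumes "face_triple F a b c"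
  shows "\<exists>d. face_triple F b c d \<and> d \<noteq> a"
proof -
  have "{b, c} \<in> tri_edges F"
    using assms unfolding face_triple_def by (auto intro: tri_edgesI)
  have "\<not> {f \<in> F. {b, c} \<subseteq> f} \<subseteq> {{a, b, c}}"
  proof
    assume "{f \<in> F. {b, c} \<subseteq> f} \<subseteq> {{a, b, c}}"
    then have "card {f \<in> F. {b, c} \<subseteq> f} \<le> 1"
      using card_mono[of "{{a, b, c}}"] by fastforce
    with card_faces_at_edge[OF \<open>{b, c} \<in> tri_edges F\<close>] show False
      by simp
  qed
  then obtain g where "g \<in> F" "{b, c} \<subseteq> g" "g \<noteq> {a, b, c}"
    by blast
  moreover obtain d where "g = {b, c, d}" "face_triple F b c d"
    using ex_third_vertex[OF \<open>g \<in> F\<close>] \<open>{b, c} \<subseteq> g\<close> assms unfolding face_triple_def by auto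
  ultimately show ?thesis
    by (auto simp: insert_commute)
qed

definition across :: "'a \<Rightarrow> 'a \<Rightarrow> 'a \<Rightarrow> 'a" where
  "across a b c = (SOME d. face_triple F b c d \<and> d \<noteq> a)"

lemma across:
  assumes "face_triple F a b c"
  shows "face_triple F b c (across a b c)" and "across a b c \<noteq> a"
  using someI_ex[OF ex_face_triple_across[OF assms]] unfolding across_def by blast+

fun ray :: "'a \<Rightarrow> 'a \<Rightarrow> 'a \<Rightarrow> nat \<Rightarrow> 'a" where
  "ray a b c 0 = a"
| "ray a b c (Suc n) = ray b c (across a b c) n"

lemma ray_face_zigzag:
  assumes "face_triple F a b c"
  shows "face_triple F (ray a b c n) (ray a b c (Suc n)) (ray a b c (Suc (Suc n))) \<and>
    ray a b c (Suc (Suc (Suc n))) \<noteq> ray a b c n"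
  using assms
proof (induction n arbitrary: a b c)
  case 0
  then show ?case
    using across by simp
next
  case (Suc n)
  then show ?case
    using across by simp
qed

definition zigzag_through :: "'a \<Rightarrow> 'a \<Rightarrow> 'a \<Rightarrow> int \<Rightarrow> 'a" where
  "zigzag_through a b c i = (if 0 \<le> i then ray a b c (nat i) else ray c b a (nat (2 - i)))"

lemma zigzag_through_eq_ray_reverse:
  assumes "i \<le> 2"
  shows "zigzag_through a b c i = ray c b a (nat (2 - i))"
proof (cases "0 \<le> i")
  case True
  with assms have "i = 0 \<or> i = 1 \<or> i = 2"
    by auto
  then show ?thesis
    unfolding zigzag_through_def by (auto simp: numeral_eq_Suc)
qed (simp add: zigzag_through_def)

lemma face_zigzag_zigzag_through:
  assumes "face_triple F a b c"
  shows "face_zigzag F (zigzag_through a b c)"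
  unfolding face_zigzag_def
proof
  fix i :: int
  let ?z = "zigzag_through a b c"
  show "face_triple F (?z i) (?z (i + 1)) (?z (i + 2)) \<and> ?z (i + 3) \<noteq> ?z i"
  proof (cases "0 \<le> i")
    case True
    then have "nat (i + 1) = Suc (nat i)" "nat (i + 2) = Suc (Suc (nat i))"
      "nat (i + 3) = Suc (Suc (Suc (nat i)))"
      by simp_all
    with True show ?thesis
      using ray_face_zigzag[OF assms, of "nat i"] by (simp add: zigzag_through_def)
  next
    case False
    define m where "m = nat (- 1 - i)"
    then have "nat (2 - i) = Suc (Suc (Suc m))" "nat (2 - (i + 1)) = Suc (Suc m)"
      "nat (2 - (i + 2)) = Suc m" "nat (2 - (i + 3)) = m"
      using False by simp_all
    with False show ?thesis
      using ray_face_zigzag[OF face_triple_reverse[OF assms], of m]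
        ray_face_zigzag[OF face_triple_reverse[OF assms], of "Suc m"]
        zigzag_through_eq_ray_reverse[of i] zigzag_through_eq_ray_reverse[of "i + 1"]
        zigzag_through_eq_ray_reverse[of "i + 2"] zigzag_through_eq_ray_reverse[of "i + 3"]
      by (auto dest: face_triple_reverse simp del: ray.simps)
  qed
qed

lemma ex_face_zigzag:
  assumes "face_triple F a b c"
  shows "\<exists>z. face_zigzag F z \<and> z 0 = a \<and> z 1 = b \<and> z 2 = c"
  using face_zigzag_zigzag_through[OF assms]
  by (intro exI[of _ "zigzag_through a b c"]) (simp add: zigzag_through_def numeral_eq_Suc)

lemma face_zigzag_unique:
  assumes "face_zigzag F z" "face_zigzag F z'" "z j = z' j" "z (j + 1) = z' (j + 1)" "z (j + 2) = z' (j + 2)"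
  shows "z = z'"
proof
  fix k :: int
  have "z i = z' i \<and> z (i + 1) = z' (i + 1) \<and> z (i + 2) = z' (i + 2)" for i
  proof (induction i rule: int_induct[where k = j])
    case base
    show ?case
      using assms by simp
  next
    case (step1 i)
    have "z' (i + 3) = z i \<or> z' (i + 3) = z (i + 3)"
      using face_zigzagD[OF assms(1), of i] face_zigzagD(1)[OF assms(1), of "i + 1"]
        face_zigzagD(1)[OF assms(2), of "i + 1"] step1.IH
      by (intro face_triple_third_cases[of "z (i + 1)" "z (i + 2)"])
        (auto dest: face_triple_rotate simp: algebra_simps)
    with step1.IH face_zigzagD(2)[OF assms(2), of i] show ?case
      by (auto simp: algebra_simps)
  next
    case (step2 i)
    have "z' (i - 1) = z (i + 2) \<or> z' (i - 1) = z (i - 1)"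
      using face_zigzagD[OF assms(1), of i] face_zigzagD[OF assms(1), of "i - 1"]
        face_zigzagD(1)[OF assms(2), of "i - 1"] step2.IH
      by (intro face_triple_third_cases[of "z (i + 1)" "z i"])
        (auto dest: face_triple_rotate face_triple_reverse simp: algebra_simps)
    with step2.IH face_zigzagD(2)[OF assms(2), of "i - 1"] show ?case
      by (auto simp: algebra_simps)
  qed
  then show "z k = z' k"
    by blast
qed

lemma face_zigzag_edge_cases:
  assumes "face_zigzag F z" "face_triple F (z 0) (z 1) w"
  shows "w = z 2 \<or> w = z (- 1)"
proof -
  have "face_triple F (z 0) (z 1) (z 2)"
    using face_zigzagD(1)[OF assms(1), of 0] by simp
  moreover have "face_triple F (z 0) (z 1) (z (- 1))"
    using face_triple_rotate[OF face_zigzagD(1)[OF assms(1), of "- 1"]] by simp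
  moreover have "z 2 \<noteq> z (- 1)"
    using face_zigzagD(2)[OF assms(1), of "- 1"] by simp
  ultimately show ?thesis
    using face_triple_third_cases[OF _ _ assms(2)] by blast
qed

end

section \<open>The digraph of a z-orientation\<close>

lemma zarc_iff_traversals_pos:
  assumes "finite (tri_vertices F)" "{a, b} \<in> tri_edges F"
    and "traversals \<tau> a b + traversals \<tau> b a = 2"
  shows "zarc F \<tau> a b \<longleftrightarrow> 0 < traversals \<tau> a b"
proof -
  have "finite {u. typeI_edge F \<tau> a u}" "finite {u. typeII_edge F \<tau> a u}"
    using assms(1) unfolding typeI_edge_def typeII_edge_def tri_edges_def tri_vertices_def
    by (auto elim!: rev_finite_subset)
  then have "typeI_edge F \<tau> a b \<or> typeII_edge F \<tau> a b \<Longrightarrow> 0 < zdeg F \<tau> a"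
    unfolding zdeg_def by (auto simp: card_gt_0_iff)
  with assms(2,3) show ?thesis
    unfolding zarc_def ztrans_def typeI_edge_def typeII_edge_def by auto
qed

locale z_oriented_pseudo_surface = pseudo_surface F for F :: "'a set set" +
  fixes \<tau> :: "(int \<Rightarrow> 'a) set"
  assumes z_orientation: "z_orientation F \<tau>"
begin

lemma face_zigzag_of_mem: "z \<in> \<tau> \<Longrightarrow> face_zigzag F z"
  using z_orientation zigzag_iff_face_zigzag[OF card_face] unfolding z_orientation_def by blast

lemma shift_mem_iff: "zz_shift z k \<in> \<tau> \<longleftrightarrow> z \<in> \<tau>"
proof
  assume "zz_shift z k \<in> \<tau>"
  then have "zz_shift (zz_shift z k) (- k) \<in> \<tau>"
    using z_orientation unfolding z_orientation_def by blast
  then show "z \<in> \<tau>"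
    by (simp add: zz_shift_def)
qed (use z_orientation in \<open>auto simp: z_orientation_def\<close>)

lemma rev_mem_iff: "face_zigzag F z \<Longrightarrow> zz_rev z \<in> \<tau> \<longleftrightarrow> z \<notin> \<tau>"
  using z_orientation zigzag_iff_face_zigzag[OF card_face] unfolding z_orientation_def by blast

definition turn :: "'a \<Rightarrow> 'a \<Rightarrow> 'a \<Rightarrow> bool" where
  "turn a b c \<longleftrightarrow> (\<exists>z\<in>\<tau>. z 0 = a \<and> z 1 = b \<and> z 2 = c)"

lemma turn_iff_mem:
  assumes "face_zigzag F z"
  shows "turn (z 0) (z 1) (z 2) \<longleftrightarrow> z \<in> \<tau>"
proof
  assume "turn (z 0) (z 1) (z 2)"
  then obtain z' where "z' \<in> \<tau>" "z' 0 = z 0" "z' 1 = z 1" "z' 2 = z 2"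
    unfolding turn_def by blast
  with assms have "z' = z"
    using face_zigzag_unique[OF face_zigzag_of_mem, of z' z 0] by simp
  with \<open>z' \<in> \<tau>\<close> show "z \<in> \<tau>"
    by simp
qed (auto simp: turn_def)

lemma turn_reverse:
  assumes "face_triple F a b c"
  shows "turn c b a \<longleftrightarrow> \<not> turn a b c"
proof -
  obtain z where z: "face_zigzag F z" "z 0 = a" "z 1 = b" "z 2 = c"
    using ex_face_zigzag[OF assms] by blast
  define r where "r = zz_shift (zz_rev z) (- 2)"
  have "face_zigzag F r"
    unfolding r_def using z(1) by (intro face_zigzag_shift face_zigzag_rev)
  moreover have "r 0 = c" "r 1 = b" "r 2 = a"
    using z unfolding r_def zz_shift_def zz_rev_def by simp_all
  ultimately have "turn c b a \<longleftrightarrow> zz_rev z \<in> \<tau>"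
    using turn_iff_mem shift_mem_iff unfolding r_def by metis
  also have "\<dots> \<longleftrightarrow> \<not> turn a b c"
    using rev_mem_iff turn_iff_mem z by metis
  finally show ?thesis .
qed

lemma traversals_eq:
  assumes "face_triple F x y w"
  shows "traversals \<tau> x y = of_bool (turn x y w) + of_bool (turn w x y)"
proof -
  obtain g where g: "face_zigzag F g" "g 0 = x" "g 1 = y" "g 2 = w"
    using ex_face_zigzag[OF assms] by blast
  obtain h' where h': "face_zigzag F h'" "h' 0 = w" "h' 1 = x" "h' 2 = y"
    using ex_face_zigzag[OF face_triple_rotate[OF face_triple_rotate[OF assms]]] by blast
  define h where "h = zz_shift h' 1"
  have h: "face_zigzag F h" "h (- 1) = w" "h 0 = x" "h 1 = y"
    using face_zigzag_shift[OF h'(1)] h'(2-4) unfolding h_def by (simp_all add: zz_shift_def)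
  txt \<open>A zigzag traversing xy either continues into the face xyw or arrives from it.\<close>
  have traversing: "{z \<in> \<tau>. z 0 = x \<and> z 1 = y} = {g, h} \<inter> \<tau>"
  proof (intro equalityI subsetI)
    fix z
    assume "z \<in> {z \<in> \<tau>. z 0 = x \<and> z 1 = y}"
    then have z: "z \<in> \<tau>" "face_zigzag F z" "z 0 = x" "z 1 = y"
      using face_zigzag_of_mem by auto
    have "w = z 2 \<or> w = z (- 1)"
      using face_zigzag_edge_cases[OF z(2)] assms z by simp
    then have "z = g \<or> z = h"
    proof
      assume "w = z 2"
      then show ?thesis
        using face_zigzag_unique[OF z(2) g(1), of 0] g z by simp
    next
      assume "w = z (- 1)"
      then show ?thesis
        using face_zigzag_unique[OF z(2) h(1), of "- 1"] h z by simp
    qed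
    with z show "z \<in> {g, h} \<inter> \<tau>"
      by blast
  qed (use g h in auto)
  have "g \<noteq> h"
    using face_zigzagD(2)[OF g(1), of "- 1"] g h by auto
  then have "card ({g, h} \<inter> \<tau>) = of_bool (g \<in> \<tau>) + of_bool (h \<in> \<tau>)"
    by (cases "g \<in> \<tau>"; cases "h \<in> \<tau>") (auto simp: Int_insert_left)
  moreover have "g \<in> \<tau> \<longleftrightarrow> turn x y w"
    using turn_iff_mem[OF g(1)] g by simp
  moreover have "h \<in> \<tau> \<longleftrightarrow> turn w x y"
    using turn_iff_mem[OF h'(1)] h' shift_mem_iff unfolding h_def by simp
  ultimately show ?thesis
    unfolding traversals_def traversing by simp
qed

lemma zarc_iff_turn:
  assumes "face_triple F a b c"
  shows "zarc F \<tau> a b \<longleftrightarrow> turn a b c \<or> turn c a b"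
proof -
  have "traversals \<tau> b a = of_bool (\<not> turn c a b) + of_bool (\<not> turn a b c)"
    using traversals_eq[OF face_triple_rotate[OF face_triple_reverse[OF assms]]]
      turn_reverse[OF face_triple_rotate[OF face_triple_rotate[OF assms]]] turn_reverse[OF assms]
    by simp
  then have "traversals \<tau> a b + traversals \<tau> b a = 2"
    using traversals_eq[OF assms] by simp
  moreover have "{a, b} \<in> tri_edges F"
    using assms unfolding face_triple_def by (auto intro: tri_edgesI)
  ultimately show ?thesis
    using zarc_iff_traversals_pos[OF finite_tri_vertices] traversals_eq[OF assms] by auto
qed

lemma face_arcs_cyclic:
  assumes abc: "face_triple F a b c"
  shows "(zarc F \<tau> a b \<and> zarc F \<tau> b c \<and> zarc F \<tau> c a) \<or> (zarc F \<tau> b a \<and> zarc F \<tau> c b \<and> zarc F \<tau> a c)"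
proof -
  have bca: "face_triple F b c a" and cab: "face_triple F c a b" and cba: "face_triple F c b a"
    and bac: "face_triple F b a c" and acb: "face_triple F a c b"
    using abc by (meson face_triple_rotate face_triple_reverse)+
  txt \<open>With T a = turn c a b, T b = turn a b c, T c = turn b c a: a -> b iff T a or T b, and
    b -> a iff not both; so the arcs form the cycle abc if two of the T's hold, acb otherwise.\<close>
  show ?thesis
    unfolding zarc_iff_turn[OF abc] zarc_iff_turn[OF bca] zarc_iff_turn[OF cab] zarc_iff_turn[OF cba]
      zarc_iff_turn[OF bac] zarc_iff_turn[OF acb] turn_reverse[OF abc] turn_reverse[OF bca]
      turn_reverse[OF cab]
    by blast
qed

lemma face_triple_relpow_3_zarc:
  assumes "face_triple F a b c"
  shows "(a, a) \<in> {(x, y). zarc F \<tau> x y} ^^ 3"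
  using face_arcs_cyclic[OF assms] unfolding numeral_3_eq_3 relpow.simps by blast

lemma relpow_3_zarc:
  assumes "v \<in> tri_vertices F"
  shows "(v, v) \<in> {(x, y). zarc F \<tau> x y} ^^ 3"
proof -
  obtain f where "f \<in> F" "v \<in> f"
    using assms unfolding tri_vertices_def by blast
  moreover obtain x y z where "f = {x, y, z}" "x \<noteq> y" "y \<noteq> z" "x \<noteq> z"
    using card_face[OF \<open>f \<in> F\<close>] card_3_iff by metis
  ultimately have xyz: "face_triple F x y z" and "v \<in> {x, y, z}"
    unfolding face_triple_def by auto
  then show ?thesis
    using face_triple_relpow_3_zarc[OF xyz] face_triple_relpow_3_zarc[OF face_triple_rotate[OF xyz]]
      face_triple_relpow_3_zarc[OF face_triple_rotate[OF face_triple_rotate[OF xyz]]]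
    by blast
qed

lemma graph_adj_subset_rtrancl_zarc: "graph_adj F \<subseteq> {(x, y). zarc F \<tau> x y}\<^sup>*"
proof
  fix e
  assume "e \<in> graph_adj F"
  then obtain u w f where "e = (u, w)" "f \<in> F" "{u, w} \<subseteq> f" "u \<noteq> w"
    unfolding graph_adj_def tri_edges_def by (auto simp: card_2_iff doubleton_eq_iff)
  then obtain c where "face_triple F u w c"
    using ex_third_vertex by blast
  from face_arcs_cyclic[OF this]
  have "(u, w) \<in> {(x, y). zarc F \<tau> x y} \<or>
      (u, c) \<in> {(x, y). zarc F \<tau> x y} \<and> (c, w) \<in> {(x, y). zarc F \<tau> x y}"
    by blast
  then show "e \<in> {(x, y). zarc F \<tau> x y}\<^sup>*"
    unfolding \<open>e = (u, w)\<close> by (meson r_into_rtrancl rtrancl_into_rtrancl)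
qed

end

theorem proposition2:
  fixes F :: "'a set set" and \<tau> :: "(int \<Rightarrow> 'a) set"
  assumes "closed_surface_triangulation F"
    and "z_orientation F \<tau>"
  shows "(mc_aperiodic (tri_vertices F) (ztrans F \<tau>) \<longleftrightarrow> mc_ergodic (tri_vertices F) (ztrans F \<tau>))
       \<and> (mc_ergodic (tri_vertices F) (ztrans F \<tau>) \<longleftrightarrow>
            (\<exists>xs. closed_walk (zarc F \<tau>) xs \<and> \<not> 3 dvd walk_length xs))"
proof -
  interpret z_oriented_pseudo_surface F \<tau>
    using assms by unfold_locales (auto simp: closed_surface_triangulation_def)
  let ?V = "tri_vertices F" and ?P = "ztrans F \<tau>"
  have zarc_eq: "zarc F \<tau> = (\<lambda>x y. 0 < ?P x y)"
    by (simp add: zarc_def fun_eq_iff)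
  have nonneg: "0 \<le> ?P x y" for x y
    by (simp add: ztrans_def)
  have arcs_in_V: "x \<in> ?V" if "0 < ?P x y" for x y
    using that unfolding ztrans_def typeI_edge_def typeII_edge_def tri_edges_def tri_vertices_def
    by (auto split: if_splits)
  have "?V \<noteq> {}"
    using assms(1) card_face unfolding closed_surface_triangulation_def tri_vertices_def by fastforce
  have "(graph_adj F)\<^sup>* \<subseteq> {(x, y). zarc F \<tau> x y}\<^sup>*"
    by (rule rtrancl_subset_rtrancl[OF graph_adj_subset_rtrancl_zarc])
  with assms(1) have "\<forall>u\<in>?V. \<forall>w\<in>?V. (u, w) \<in> {(x, y). zarc F \<tau> x y}\<^sup>*"
    unfolding closed_surface_triangulation_def by blast
  then have "mc_irreducible ?V ?P"
    using mc_irreducible_iff_rtrancl[OF finite_tri_vertices nonneg arcs_in_V] by (simp add: zarc_eq)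
  moreover have "mc_aperiodic ?V ?P \<longleftrightarrow> (\<exists>xs. closed_walk (zarc F \<tau>) xs \<and> \<not> 3 dvd walk_length xs)"
    using mc_aperiodic_iff_closed_walk_not_dvd[OF finite_tri_vertices \<open>?V \<noteq> {}\<close> nonneg arcs_in_V
        \<open>mc_irreducible ?V ?P\<close>, where p = 3] relpow_3_zarc
    unfolding zarc_eq by simp
  ultimately show ?thesis
    unfolding mc_ergodic_def by blast
qed

end
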